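(* $$\lim_{k \to \infty} \sum_{n=0}^{\infty} \frac{1}{n!}\left\langle {n \atop k} \right\rangle = 2,$$ where the limit is over nonnegative integers $k$.
   Context: For integers $n,k\ge 0$, the Eulerian number $\left\langle {n \atop k} \right\rangle$ is the number of permutations of $\{1,\ldots,n\}$ with exactly $k$ ascents (positions $i$ with $\sigma(i)<\sigma(i+1)$), with $\left\langle {0 \atop 0} \right\rangle=1$ and $\left\langle {0 \atop k} \right\rangle=0$ for $k\ge1$; in particular $\left\langle {n \atop k} \right\rangle=0$ when $n<k$. Equivalently they satisfy $\left\langle {n \atop k} \right\rangle = (k+1)\left\langle {n-1 \atop k} \right\rangle + (n-k)\left\langle {n-1 \atop k-1} \right\rangle$. *)

theory Defs
  imports "HOL-Analysis.Analysis"
begin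

fun eulerian :: "nat \<Rightarrow> nat \<Rightarrow> nat" where
  "eulerian 0 k = (if k = 0 then 1 else 0)"
| "eulerian (Suc n) 0 = eulerian n 0"
| "eulerian (Suc n) (Suc k) =
     (Suc k + 1) * eulerian n (Suc k) + (Suc n - Suc k) * eulerian n k"

end

theory Submission
  imports Defs "HOL-Complex_Analysis.Complex_Analysis"
begin

(* The alternating formula E(n,k) = sum_{j<=k} (-1)^j C(n+1,j) (k+1-j)^n turns
   a_k = sum_n E(n,k)/n! into a finite combination of values of the exponential, and makes the
   generating function sum_k a_k t^k equal to (1 - t)/D(t) with D(t) = exp (t - 1) - t.
   In the strip |Im t| < pi the only zero of D is the double zero t = 1, so subtracting the
   pole part 2/(1 - t) leaves a function holomorphic on the disc of radius pi > 1. Its Taylor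
   coefficients a_k - 2 are then summable at t = 1, hence tend to 0. *)

section \<open>The alternating formula for Eulerian numbers\<close>

lemma eulerian_eq_0: "n < k \<Longrightarrow> eulerian n k = 0"
proof (induction n arbitrary: k)
  case (Suc n)
  then show ?case by (cases k) auto
qed simp

lemma Suc_times_binomial_Suc_eq: "Suc k * (n choose Suc k) = (n - k) * (n choose k)"
  by (metis binomial_absorption binomial_absorb_comp)

lemma binomial_Suc_Suc_mult_diff:
  assumes "i \<le> k"
  shows "int (Suc (Suc n) choose Suc i) * int (Suc k - i) =
           int (k + 2) * int (Suc n choose Suc i) - (int n - int k) * int (Suc n choose i)"
proof -
  define b0 b1 where "b0 = int (Suc n choose i)" and "b1 = int (Suc n choose Suc i)"
  have absorb: "int (Suc i) * b1 = (int n + 1 - int i) * b0"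
  proof (cases "i \<le> Suc n")
    case True
    then show ?thesis
      using arg_cong[OF Suc_times_binomial_Suc_eq[of i "Suc n"], of int]
      by (simp only: of_nat_mult of_nat_diff) (simp add: b0_def b1_def del: binomial_Suc_Suc)
  qed (simp add: b0_def b1_def binomial_eq_0)
  have "int (Suc (Suc n) choose Suc i) = b0 + b1"
    by (simp only: binomial_Suc_Suc b0_def b1_def of_nat_add add.commute)
  moreover have "(b0 + b1) * int (Suc k - i) - (int (k + 2) * b1 - (int n - int k) * b0)
      = (int n + 1 - int i) * b0 - int (Suc i) * b1"
    using assms by (simp add: of_nat_diff algebra_simps)
  ultimately show ?thesis
    using absorb by (simp add: b0_def b1_def)
qed

definition eulerian_explicit :: "nat \<Rightarrow> nat \<Rightarrow> int" where
  "eulerian_explicit n k = (\<Sum>j\<le>k. (-1)^j * int (Suc n choose j) * int (Suc k - j)^n)"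

lemma eulerian_explicit_Suc_Suc:
  "eulerian_explicit (Suc n) (Suc k) =
     int (k + 2) * eulerian_explicit n (Suc k) + (int n - int k) * eulerian_explicit n k"
proof -
  have summand_eq: "(-1)^Suc i * int (Suc (Suc n) choose Suc i) * int (Suc k - i)^Suc n =
      int (k + 2) * ((-1)^Suc i * int (Suc n choose Suc i) * int (Suc k - i)^n)
      + (int n - int k) * ((-1)^i * int (Suc n choose i) * int (Suc k - i)^n)"
    if "i \<le> k" for i
  proof -
    have "(-1)^Suc i * int (Suc (Suc n) choose Suc i) * int (Suc k - i)^Suc n
        = (-1)^Suc i * int (Suc k - i)^n * (int (Suc (Suc n) choose Suc i) * int (Suc k - i))"
      by (simp only: power_Suc ac_simps)
    then show ?thesis
      unfolding binomial_Suc_Suc_mult_diff[OF that] by (simp add: algebra_simps)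
  qed
  have shift: "eulerian_explicit n (Suc k) = int (k + 2)^n +
      (\<Sum>i\<le>k. (-1)^Suc i * int (Suc n choose Suc i) * int (Suc k - i)^n)"
    unfolding eulerian_explicit_def sum.atMost_Suc_shift by (simp del: binomial_Suc_Suc)
  have "eulerian_explicit (Suc n) (Suc k) = int (k + 2)^Suc n +
      (\<Sum>i\<le>k. (-1)^Suc i * int (Suc (Suc n) choose Suc i) * int (Suc k - i)^Suc n)"
    unfolding eulerian_explicit_def sum.atMost_Suc_shift by (simp del: binomial_Suc_Suc)
  also have "\<dots> = int (k + 2)^Suc n +
      (\<Sum>i\<le>k. int (k + 2) * ((-1)^Suc i * int (Suc n choose Suc i) * int (Suc k - i)^n)
        + (int n - int k) * ((-1)^i * int (Suc n choose i) * int (Suc k - i)^n))"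
    using summand_eq by simp
  also have "\<dots> = int (k + 2) * eulerian_explicit n (Suc k) + (int n - int k) * eulerian_explicit n k"
    unfolding shift eulerian_explicit_def[of n k] sum.distrib
    by (simp add: sum_distrib_left distrib_left)
  finally show ?thesis .
qed

lemma eulerian_eq_explicit: "int (eulerian n k) = eulerian_explicit n k"
proof (induction n arbitrary: k)
  case 0
  have "(\<Sum>j\<le>k. (-1)^j * int (Suc 0 choose j)) = (if k = 0 then 1 else 0)"
    by (induction k) (auto simp: binomial_eq_0)
  then show ?case
    by (simp add: eulerian_explicit_def)
next
  case (Suc n)
  show ?case
  proof (cases k)
    case 0
    then show ?thesis
      using Suc.IH[of 0] by (simp add: eulerian_explicit_def)
  next
    case (Suc k')
    have "int (eulerian (Suc n) (Suc k')) =
        int (k' + 2) * int (eulerian n (Suc k')) + int (n - k') * int (eulerian n k')"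
      by (simp only: eulerian.simps of_nat_add of_nat_mult diff_Suc_Suc) simp
    also have "int (n - k') * int (eulerian n k') = (int n - int k') * int (eulerian n k')"
      by (cases "k' \<le> n") (simp_all add: of_nat_diff eulerian_eq_0)
    finally show ?thesis
      unfolding Suc Suc.IH eulerian_explicit_Suc_Suc .
  qed
qed

lemma sums_binomial_power_div_fact:
  "(\<lambda>n. real (n choose j) * x^n / fact n) sums (x^j / fact j * exp x)"
proof -
  have "(\<lambda>i. x^j / fact j * (x^i /\<^sub>R fact i)) sums (x^j / fact j * exp x)"
    by (intro sums_mult exp_converges)
  moreover have "x^j / fact j * (x^i /\<^sub>R fact i) = real ((i + j) choose j) * x^(i + j) / fact (i + j)"
    for i
    by (simp add: binomial_fact power_add field_simps)
  ultimately have "(\<lambda>i. real ((i + j) choose j) * x^(i + j) / fact (i + j)) sums (x^j / fact j * exp x)"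
    by simp
  then have "(\<lambda>n. real (n choose j) * x^n / fact n) sums
      (x^j / fact j * exp x + (\<Sum>i<j. real (i choose j) * x^i / fact i))"
    by (subst (asm) sums_iff_shift)
  then show ?thesis
    by (simp add: binomial_eq_0)
qed

definition xexp :: "'a::field_char_0 fps" where
  "xexp = fps_X * fps_exp (-1)"

lemma xexp_power_nth:
  "(xexp ^ p) $ m = (if p \<le> m then (- of_nat p)^(m - p) / fact (m - p) else 0)"
  by (simp add: xexp_def power_mult_distrib fps_exp_power_mult fps_X_power_mult_nth)

lemma fps_shift_eq_const_plus_fps_X_mult:
  fixes f :: "'a :: comm_ring_1 fps"
  shows "fps_shift n f = fps_const (f $ n) + fps_X * fps_shift (Suc n) f"
  by (rule fps_ext) (auto simp: gr0_conv_Suc)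

lemma eval_fps_shift_Suc:
  fixes f :: "'a :: {banach, real_normed_div_algebra, comm_ring_1} fps"
  assumes "norm z < fps_conv_radius f"
  shows "eval_fps (fps_shift n f) z = f $ n + z * eval_fps (fps_shift (Suc n) f) z"
  using assms
  by (subst fps_shift_eq_const_plus_fps_X_mult) (simp add: eval_fps_add eval_fps_mult
      order.strict_trans2[OF _ fps_conv_radius_mult])

text \<open>For z \<noteq> 0, exp_tail m z = (exp z - (\<Sum>j<m. z^j / fact j)) / z^m.\<close>

definition exp_tail :: "nat \<Rightarrow> 'a :: {banach, real_normed_field} \<Rightarrow> 'a" where
  "exp_tail m = eval_fps (fps_shift m (fps_exp 1))"

lemma exp_tail_0 [simp]: "exp_tail 0 z = exp z"
  by (simp add: exp_tail_def)

lemma exp_tail_Suc: "exp_tail m z = 1 / fact m + z * exp_tail (Suc m) z"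
  unfolding exp_tail_def by (subst eval_fps_shift_Suc) simp_all

lemma exp_eq_exp_tail_2: "exp z = 1 + z + z^2 * exp_tail 2 z"
  using exp_tail_Suc[of 0 z] exp_tail_Suc[of 1 z]
  by (simp add: power2_eq_square algebra_simps numeral_2_eq_2)

lemma holomorphic_on_exp_tail [holomorphic_intros]:
  assumes "g holomorphic_on A"
  shows "(\<lambda>z. exp_tail m (g z)) holomorphic_on A"
proof -
  have "exp_tail m holomorphic_on UNIV"
    unfolding exp_tail_def by (rule holomorphic_on_eval_fps) simp
  then show ?thesis
    using holomorphic_on_compose[OF assms, of "exp_tail m"] by (simp add: o_def holomorphic_on_subset)
qed

lemma has_fps_expansion_nth_tendsto_0:
  fixes f :: "complex \<Rightarrow> complex"
  assumes "f has_fps_expansion F" "f holomorphic_on ball 0 r" "1 < r"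
  shows "(\<lambda>n. F $ n) \<longlonglongrightarrow> 0"
proof -
  have "ereal (norm (1 :: complex)) < ereal r"
    using assms(3) by simp
  also have "ereal r \<le> fps_conv_radius F"
    using holomorphic_on_imp_fps_conv_radius_ge[OF assms(1)] assms(2) by simp
  finally have "norm (1 :: complex) < fps_conv_radius F" .
  then have "summable (\<lambda>n. F $ n * 1 ^ n)"
    by (rule summable_fps)
  then show ?thesis
    using summable_LIMSEQ_zero by simp
qed

section \<open>The fixed points of exp (t - 1) in the strip\<close>

lemma mult_cos_less_sin:
  fixes y :: real
  assumes "0 < y" "y < pi"
  shows "y * cos y < sin y"
proof -
  have "(\<lambda>x. sin x - x * cos x) 0 < (\<lambda>x. sin x - x * cos x) y"
  proof (rule DERIV_pos_imp_increasing_open[OF assms(1)])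
    fix x :: real
    assume "0 < x" "x < y"
    then have "0 < x * sin x"
      using assms by (intro mult_pos_pos sin_gt_zero) auto
    moreover have "DERIV (\<lambda>x. sin x - x * cos x) x :> cos x - (1 * cos x + x * (- sin x))"
      by (intro derivative_eq_intros) auto
    moreover have "cos x - (1 * cos x + x * (- sin x)) = x * sin x"
      by simp
    ultimately show "\<exists>d. DERIV (\<lambda>x. sin x - x * cos x) x :> d \<and> 0 < d"
      by metis
  qed (intro continuous_intros)
  then show ?thesis
    by simp
qed

lemma exp_cos_sin_not_fixed:
  fixes x v :: real
  assumes v: "0 < v" "v < pi"
    and re: "exp (x - 1) * cos v = x" and im: "exp (x - 1) * sin v = v"
  shows False
proof -
  have sin_v: "0 < sin v"
    using v by (intro sin_gt_zero) auto
  have "x * sin v = exp (x - 1) * cos v * sin v"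
    by (simp only: re)
  also have "\<dots> = exp (x - 1) * sin v * cos v"
    by (simp only: ac_simps)
  also have "\<dots> = v * cos v"
    by (simp only: im)
  also have "\<dots> < 1 * sin v"
    using mult_cos_less_sin[OF v] by simp
  finally have "x < 1"
    by (rule mult_right_less_imp_less) (use sin_v in simp)
  then have "exp (x - 1) * sin v < sin v"
    using sin_v by simp
  then show False
    using im sin_x_le_x[of v] v by simp
qed

lemma exp_minus_one_eq_self_imp_eq_1:
  fixes t :: complex
  assumes "\<bar>Im t\<bar> < pi" "exp (t - 1) = t"
  shows "t = 1"
proof -
  define x y where "x = Re t" and "y = Im t"
  have re: "exp (x - 1) * cos y = x" and im: "exp (x - 1) * sin y = y"
    using arg_cong[OF assms(2), of Re] arg_cong[OF assms(2), of Im]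
    by (simp_all add: x_def y_def Re_exp Im_exp)
  have "y = 0"
  proof (rule ccontr)
    assume "y \<noteq> 0"
    then consider "0 < y" | "0 < - y"
      by linarith
    then show False
    proof cases
      case 1
      then show False
        using exp_cos_sin_not_fixed[OF _ _ re im] assms(1) by (simp add: y_def)
    next
      case 2
      then show False
        using exp_cos_sin_not_fixed[of "- y" x] re im assms(1) by (simp add: y_def)
    qed
  qed
  then have "exp (x - 1) = x"
    using re by simp
  then have "x = 1"
    using exp_minus_greater[of "1 - x"] by (cases "x = 1") auto
  then show ?thesis
    using \<open>y = 0\<close> by (simp add: x_def y_def complex_eq_iff)
qed

section \<open>The generating function\<close>

text \<open>The m-th coefficient of 1 / (1 - e z exp (-z)), see inverse_one_minus_e_xexp_nth.\<close>

definition exp_geom_coeff :: "nat \<Rightarrow> real" where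
  "exp_geom_coeff m = (\<Sum>p\<le>m. exp (real p) * (xexp ^ p) $ m)"

lemma sums_eulerian_explicit_summand:
  assumes "j \<le> k"
  defines "p \<equiv> Suc k - j"
  shows "(\<lambda>n. (-1)^j * real (Suc n choose j) * real p^n / fact n)
           sums (exp (real p) * ((xexp ^ p) $ Suc k - (xexp ^ p) $ k))"
proof (cases j)
  case 0
  then show ?thesis
    using exp_converges[of "real p"] by (simp add: p_def xexp_power_nth field_simps del: power_Suc)
next
  case (Suc i)
  have p: "Suc k - p = j" "k - p = i" "p \<le> k"
    using assms Suc by (auto simp: p_def)
  have "(xexp ^ p) $ Suc k = (- real p)^j / fact j" "(xexp ^ p) $ k = (- real p)^i / fact i"
    unfolding xexp_power_nth using p by simp_all
  then have limit: "exp (real p) * ((xexp ^ p) $ Suc k - (xexp ^ p) $ k)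
      = (-1)^j * (real p^i / fact i * exp p + real p^j / fact j * exp p)"
    unfolding power_minus[of "real p"] Suc by (simp add: algebra_simps)
  have "(-1)^j * real (Suc n choose j) * real p^n / fact n
      = (-1)^j * (real (n choose i) * real p^n / fact n + real (n choose j) * real p^n / fact n)" for n
    by (simp add: Suc field_simps)
  then show ?thesis
    unfolding limit by (simp only:) (intro sums_mult sums_add sums_binomial_power_div_fact)
qed

lemma sums_eulerian_div_fact:
  "(\<lambda>n. real (eulerian n k) / fact n)
     sums (exp_geom_coeff (Suc k) - exp_geom_coeff k + (if k = 0 then 1 else 0))"
proof -
  define g where "g p = exp (real p) * ((xexp ^ p) $ Suc k - (xexp ^ p) $ k :: real)" for p
  have expand: "real (eulerian n k) / fact n =
      (\<Sum>j\<le>k. (-1)^j * real (Suc n choose j) * real (Suc k - j)^n / fact n)" for n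
  proof -
    have "real (eulerian n k) = of_int (eulerian_explicit n k)"
      by (simp flip: eulerian_eq_explicit)
    then show ?thesis
      by (simp add: eulerian_explicit_def sum_divide_distrib)
  qed
  have "(\<lambda>n. real (eulerian n k) / fact n) sums (\<Sum>j\<le>k. g (Suc k - j))"
    unfolding expand g_def by (intro sums_sum sums_eulerian_explicit_summand) simp
  also have "(\<Sum>j\<le>k. g (Suc k - j)) = (\<Sum>p\<in>{1..Suc k}. g p)"
    by (rule sum.reindex_bij_witness[of _ "\<lambda>p. Suc k - p" "\<lambda>p. Suc k - p"]) auto
  also have "\<dots> = (\<Sum>p\<le>Suc k. g p) - g 0"
    by (simp add: atMost_atLeast0 sum.atLeast_Suc_atMost del: sum.atMost_Suc)
  also have "(\<Sum>p\<le>Suc k. g p) = exp_geom_coeff (Suc k) - exp_geom_coeff k"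
  proof -
    have "(xexp ^ Suc k) $ k = (0::real)"
      by (simp add: xexp_power_nth del: power_Suc)
    then show ?thesis
      unfolding g_def exp_geom_coeff_def right_diff_distrib sum_subtractf by (simp del: power_Suc)
  qed
  also have "g 0 = - (if k = 0 then 1 else 0)"
    by (simp add: g_def)
  finally show ?thesis
    by simp
qed

definition e_xexp :: "complex fps" where
  "e_xexp = fps_const (exp 1) * xexp"

lemma e_xexp_power_nth: "(e_xexp ^ p) $ m = of_real (exp (real p) * (xexp ^ p) $ m)"
proof -
  have "(xexp ^ p :: complex fps) $ m = of_real ((xexp ^ p :: real fps) $ m)"
    by (simp add: xexp_power_nth)
  moreover have "exp 1 ^ p = (of_real (exp (real p)) :: complex)"
    by (simp add: of_real_exp flip: exp_of_nat_mult)
  ultimately show ?thesis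
    by (simp add: e_xexp_def power_mult_distrib fps_const_power)
qed

lemma inverse_one_minus_e_xexp_mult: "inverse (1 - e_xexp) * (1 - e_xexp) = 1"
  by (rule inverse_mult_eq_1) (simp add: e_xexp_def xexp_def)

lemma inverse_one_minus_e_xexp_nth: "inverse (1 - e_xexp) $ m = of_real (exp_geom_coeff m)"
proof -
  define H where "H = inverse (1 - e_xexp)"
  have "(\<Sum>p\<le>m. e_xexp ^ p) = H * ((1 - e_xexp) * (\<Sum>p\<le>m. e_xexp ^ p))"
    using inverse_one_minus_e_xexp_mult by (simp only: H_def mult.assoc[symmetric] mult_1)
  also have "\<dots> = H - H * e_xexp ^ Suc m"
    by (simp only: sum_gp_basic right_diff_distrib mult_1_right)
  finally have "(\<Sum>p\<le>m. e_xexp ^ p) = H - H * e_xexp ^ Suc m" .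
  moreover have "(H * e_xexp ^ Suc m) $ m = 0"
  proof -
    have "e_xexp ^ Suc m = fps_X ^ Suc m * (fps_const (exp 1) * fps_exp (-1)) ^ Suc m"
      unfolding e_xexp_def xexp_def by (simp only: power_mult_distrib ac_simps)
    then show ?thesis
      by (simp only: mult.left_commute[of H] fps_X_power_mult_nth) simp
  qed
  ultimately have "H $ m = (\<Sum>p\<le>m. e_xexp ^ p) $ m"
    by (simp del: power_Suc)
  also have "\<dots> = (\<Sum>p\<le>m. (e_xexp ^ p) $ m)"
    by (rule fps_sum_nth)
  finally show ?thesis
    by (simp add: H_def e_xexp_power_nth exp_geom_coeff_def)
qed

definition eulerian_fps :: "complex fps" where
  "eulerian_fps = Abs_fps (\<lambda>k. of_real (\<Sum>n. real (eulerian n k) / fact n))"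

lemma fps_X_mult_eulerian_fps:
  "fps_X * eulerian_fps = (inverse (1 - e_xexp) - 1) * (1 - fps_X)"
proof (rule fps_ext)
  fix m
  define H where "H = inverse (1 - e_xexp)"
  have H_nth: "H $ n = of_real (exp_geom_coeff n)" for n
    unfolding H_def by (rule inverse_one_minus_e_xexp_nth)
  have H0: "H $ 0 = 1"
    by (simp add: H_nth exp_geom_coeff_def)
  show "(fps_X * eulerian_fps) $ m = ((H - 1) * (1 - fps_X)) $ m"
  proof (cases m)
    case (Suc k)
    have "(\<Sum>n. real (eulerian n k) / fact n) =
        exp_geom_coeff (Suc k) - exp_geom_coeff k + (if k = 0 then 1 else 0)"
      by (rule sums_unique[OF sums_eulerian_div_fact, symmetric])
    then have "(fps_X * eulerian_fps) $ m = H $ Suc k - H $ k + (if k = 0 then 1 else 0)"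
      by (simp add: Suc eulerian_fps_def H_nth)
    also have "\<dots> = ((H - 1) * (1 - fps_X)) $ m"
      by (simp add: Suc H0 algebra_simps)
    finally show ?thesis .
  qed (simp add: H0)
qed

definition eulerian_denom_fps :: "complex fps" where
  "eulerian_denom_fps = fps_const (exp (-1)) * fps_exp 1 - fps_X"

lemma exp_mult_e_xexp: "fps_const (exp (-1)) * fps_exp 1 * e_xexp = fps_X"
proof -
  have "fps_exp 1 * fps_exp (-1) = (1 :: complex fps)"
    by (simp flip: fps_exp_add_mult)
  moreover have "exp (-1) * exp 1 = (1 :: complex)"
    by (simp flip: exp_add)
  moreover have "fps_const (exp (-1)) * fps_exp 1 * e_xexp =
      fps_const (exp (-1) * exp 1) * (fps_exp 1 * fps_exp (-1)) * fps_X"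
    unfolding e_xexp_def xexp_def by (simp add: ac_simps)
  ultimately show ?thesis
    by simp
qed

lemma eulerian_fps_mult_denom_fps: "eulerian_fps * eulerian_denom_fps = 1 - fps_X"
proof -
  define H where "H = inverse (1 - e_xexp)"
  have HK: "(H - 1) * (1 - e_xexp) = e_xexp"
    using inverse_one_minus_e_xexp_mult by (simp add: H_def algebra_simps)
  have denom_factor: "eulerian_denom_fps = fps_const (exp (-1)) * fps_exp 1 * (1 - e_xexp)"
    using exp_mult_e_xexp by (simp add: eulerian_denom_fps_def right_diff_distrib)
  have "(H - 1) * eulerian_denom_fps = fps_const (exp (-1)) * fps_exp 1 * ((H - 1) * (1 - e_xexp))"
    unfolding denom_factor by (simp only: ac_simps)
  also have "\<dots> = fps_X"
    by (simp only: HK exp_mult_e_xexp)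
  finally have "fps_X * eulerian_fps * eulerian_denom_fps = fps_X * (1 - fps_X)"
    unfolding fps_X_mult_eulerian_fps H_def[symmetric] by (simp add: ac_simps)
  then show ?thesis
    by simp
qed

section \<open>Removing the pole at t = 1\<close>

definition eulerian_denom :: "complex \<Rightarrow> complex" where
  "eulerian_denom t = exp (t - 1) - t"

lemma eulerian_denom_eq_exp_tail: "eulerian_denom t = (t - 1)^2 * exp_tail 2 (t - 1)"
  using exp_eq_exp_tail_2[of "t - 1"] by (simp add: eulerian_denom_def)

lemma exp_tail_2_nonzero:
  assumes "\<bar>Im t\<bar> < pi"
  shows "exp_tail 2 (t - 1) \<noteq> 0"
proof
  assume zero: "exp_tail 2 (t - 1) = 0"
  then have "exp (t - 1) = t"
    using eulerian_denom_eq_exp_tail[of t] by (simp add: eulerian_denom_def)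
  then have "t = 1"
    using exp_minus_one_eq_self_imp_eq_1 assms by blast
  then show False
    using zero exp_tail_Suc[of 2 "0 :: complex"] by simp
qed

lemma eulerian_denom_has_fps_expansion: "eulerian_denom has_fps_expansion eulerian_denom_fps"
proof -
  have "eulerian_denom = (\<lambda>t. exp (-1) * exp t - t)"
    by (auto simp: eulerian_denom_def exp_diff exp_minus field_simps)
  moreover have "(\<lambda>t. exp (-1) * exp t - t) has_fps_expansion eulerian_denom_fps"
    unfolding eulerian_denom_fps_def by (intro fps_expansion_intros)
  ultimately show ?thesis
    by simp
qed

text \<open>This is (1 - t) / eulerian_denom t - 2 / (1 - t), written without the removable
  singularity at t = 1.\<close>

definition eulerian_regular :: "complex \<Rightarrow> complex" where
  "eulerian_regular t = 2 * exp_tail 3 (t - 1) / exp_tail 2 (t - 1)"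

lemma holomorphic_on_eulerian_regular: "eulerian_regular holomorphic_on ball 0 pi"
proof -
  have "exp_tail 2 (t - 1) \<noteq> 0" if "t \<in> ball 0 pi" for t :: complex
    using that abs_Im_le_cmod[of t] by (intro exp_tail_2_nonzero) simp
  then show ?thesis
    unfolding eulerian_regular_def by (intro holomorphic_intros) auto
qed

lemma eulerian_regular_mult_eq:
  assumes "exp_tail 2 (t - 1) \<noteq> 0"
  shows "eulerian_regular t * (1 - t) * eulerian_denom t = (1 - t)^2 - 2 * eulerian_denom t"
proof -
  define w Q R where "w = t - 1" and "Q = exp_tail 2 w" and "R = exp_tail 3 w"
  have Q: "Q = 1 / 2 + w * R"
    using exp_tail_Suc[of 2 w] by (simp add: Q_def R_def numeral_3_eq_3)
  have "eulerian_regular t * (1 - t) * eulerian_denom t = 2 * R / Q * (- w) * (w^2 * Q)"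
    by (simp add: eulerian_regular_def eulerian_denom_eq_exp_tail w_def Q_def R_def)
  also have "\<dots> = - 2 * w^3 * R"
    using assms by (simp add: Q_def w_def[symmetric] power2_eq_square power3_eq_cube)
  also have "\<dots> = w^2 - 2 * (w^2 * Q)"
    by (simp add: Q algebra_simps power2_eq_square power3_eq_cube)
  also have "\<dots> = (1 - t)^2 - 2 * eulerian_denom t"
    by (simp add: eulerian_denom_eq_exp_tail w_def Q_def power2_commute)
  finally show ?thesis .
qed

lemma fps_expansion_eulerian_regular_mult:
  "fps_expansion eulerian_regular 0 * ((1 - fps_X) * eulerian_denom_fps) =
     (1 - fps_X)^2 - 2 * eulerian_denom_fps"
proof -
  define F where "F = fps_expansion eulerian_regular 0"
  have F: "eulerian_regular has_fps_expansion F"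
    unfolding F_def using holomorphic_on_eulerian_regular
    by (intro has_fps_expansion_fps_expansion) auto
  have "eventually (\<lambda>t. t \<in> ball 0 pi) (nhds (0 :: complex))"
    by (intro eventually_nhds_in_open) auto
  then have ev: "eventually (\<lambda>t. eulerian_regular t * (1 - t) * eulerian_denom t =
      (1 - t)^2 - 2 * eulerian_denom t) (nhds 0)"
  proof eventually_elim
    case (elim t)
    then show ?case
      using abs_Im_le_cmod[of t] by (intro eulerian_regular_mult_eq exp_tail_2_nonzero) simp
  qed
  have "(\<lambda>t. eulerian_regular t * (1 - t) * eulerian_denom t)
      has_fps_expansion F * (1 - fps_X) * eulerian_denom_fps"
    by (intro fps_expansion_intros F eulerian_denom_has_fps_expansion)
  then have "(\<lambda>t. (1 - t)^2 - 2 * eulerian_denom t)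
      has_fps_expansion F * (1 - fps_X) * eulerian_denom_fps"
    by (rule has_fps_expansion_cong[OF ev refl, THEN iffD1])
  moreover have "(\<lambda>t. (1 - t)^2 - 2 * eulerian_denom t)
      has_fps_expansion (1 - fps_X)^2 - 2 * eulerian_denom_fps"
    by (intro fps_expansion_intros eulerian_denom_has_fps_expansion)
  ultimately show ?thesis
    unfolding F_def[symmetric] using fps_expansion_unique_complex by (metis mult.assoc)
qed

lemma eulerian_fps_minus_geometric_mult:
  "(eulerian_fps - 2 * Abs_fps (\<lambda>_. 1)) * ((1 - fps_X) * eulerian_denom_fps) =
     (1 - fps_X)^2 - 2 * eulerian_denom_fps"
proof -
  define G :: "complex fps" where "G = Abs_fps (\<lambda>_. 1)"
  have G: "G * (1 - fps_X) = 1"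
    using inverse_mult_eq_1'[of G] unfolding G_def fps_inverse_gp' by simp
  have "(eulerian_fps - 2 * G) * ((1 - fps_X) * eulerian_denom_fps)
      = (1 - fps_X) * (eulerian_fps * eulerian_denom_fps) - 2 * eulerian_denom_fps * (G * (1 - fps_X))"
    by (simp add: algebra_simps)
  then show ?thesis
    unfolding G_def[symmetric] eulerian_fps_mult_denom_fps G by (simp add: power2_eq_square)
qed

lemma eulerian_regular_has_fps_expansion:
  "eulerian_regular has_fps_expansion eulerian_fps - 2 * Abs_fps (\<lambda>_. 1)"
proof -
  have "((1 - fps_X) * eulerian_denom_fps) $ 0 \<noteq> 0"
    by (simp add: eulerian_denom_fps_def)
  then have "fps_expansion eulerian_regular 0 = eulerian_fps - 2 * Abs_fps (\<lambda>_. 1)"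
    using fps_expansion_eulerian_regular_mult eulerian_fps_minus_geometric_mult
    by (metis fps_nonzeroI mult_right_cancel)
  moreover have "eulerian_regular has_fps_expansion fps_expansion eulerian_regular 0"
    using holomorphic_on_eulerian_regular by (intro has_fps_expansion_fps_expansion) auto
  ultimately show ?thesis
    by simp
qed

theorem mainTheorem4:
  shows "(\<forall>k. summable (\<lambda>n. real (eulerian n k) / fact n)) \<and>
         (\<lambda>k. \<Sum>n. real (eulerian n k) / fact n) \<longlonglongrightarrow> 2"
proof
  show "\<forall>k. summable (\<lambda>n. real (eulerian n k) / fact n)"
    using sums_eulerian_div_fact sums_summable by blast
  have "(\<lambda>k. (eulerian_fps - 2 * Abs_fps (\<lambda>_. 1)) $ k) \<longlonglongrightarrow> 0"
    using eulerian_regular_has_fps_expansion holomorphic_on_eulerian_regular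
    by (rule has_fps_expansion_nth_tendsto_0) (use pi_gt3 in linarith)
  then have "(\<lambda>k. complex_of_real ((\<Sum>n. real (eulerian n k) / fact n) - 2)) \<longlonglongrightarrow> of_real 0"
    by (simp add: eulerian_fps_def)
  then show "(\<lambda>k. \<Sum>n. real (eulerian n k) / fact n) \<longlonglongrightarrow> 2"
    by (simp only: tendsto_of_real_iff LIM_zero_iff)
qed

end
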